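(* Let $a,b$ be coprime positive integers with $ab\ne1$. Then $$M_{a,b}(B)=\#\left\{(s,t)\in\mathbb{Z}^2:\ \begin{array}{l}\gcd(s,t)=1,\ s(s-at)\ne0,\ s/t\ne(a^2-b^2)/(2a),\\ t>0,\ 0<-Q_3(s,t),\\ 0<-Q_j(s,t)\le \lambda B/\max\{a,b\}\text{ for }j=1,2\end{array}\right\}+O(1),$$ where $\lambda=\gcd(Q_1(s,t),Q_2(s,t))$.
   Context: $M_{a,b}(B)$ is the number of $(x,y,z)\in\mathbb{N}^3$ with $(a^2-b^2)x^2+(a^2+b^2)y^2=2z^2$, $\gcd(x,y)=1$ and $\max\{a,b\}\max\{x,y\}\le B$. The binary quadratic forms are $Q_1(s,t)=2s^2+(a^2-b^2)t^2-4ast$, $Q_2(s,t)=-2s^2+(a^2-b^2)t^2$, $Q_3(s,t)=-2as^2+2(a^2-b^2)st-a(a^2-b^2)t^2$. The implied constant is absolute. *)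

theory Defs
  imports Complex_Main
begin

definition M_count :: "nat \<Rightarrow> nat \<Rightarrow> real \<Rightarrow> nat" where
  "M_count a b B = card {(x :: nat, y :: nat, z :: nat).
      0 < x \<and> 0 < y \<and> 0 < z \<and>
      (int a ^ 2 - int b ^ 2) * int x ^ 2 + (int a ^ 2 + int b ^ 2) * int y ^ 2 = 2 * int z ^ 2 \<and>
      gcd x y = 1 \<and>
      real (max a b * max x y) \<le> B}"

definition Q1 :: "int \<Rightarrow> int \<Rightarrow> int \<Rightarrow> int \<Rightarrow> int" where
  "Q1 a b s t = 2 * s ^ 2 + (a ^ 2 - b ^ 2) * t ^ 2 - 4 * a * s * t"

definition Q2 :: "int \<Rightarrow> int \<Rightarrow> int \<Rightarrow> int \<Rightarrow> int" where
  "Q2 a b s t = - 2 * s ^ 2 + (a ^ 2 - b ^ 2) * t ^ 2"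

definition Q3 :: "int \<Rightarrow> int \<Rightarrow> int \<Rightarrow> int \<Rightarrow> int" where
  "Q3 a b s t = - 2 * a * s ^ 2 + 2 * (a ^ 2 - b ^ 2) * s * t - a * (a ^ 2 - b ^ 2) * t ^ 2"

definition N_set :: "nat \<Rightarrow> nat \<Rightarrow> real \<Rightarrow> (int \<times> int) set" where
  "N_set a b B = {(s, t). gcd s t = 1 \<and> s * (s - int a * t) \<noteq> 0 \<and>
      real_of_int s / real_of_int t \<noteq> (real a ^ 2 - real b ^ 2) / (2 * real a) \<and>
      t > 0 \<and> 0 < - Q3 (int a) (int b) s t \<and>
      (let lam = gcd (Q1 (int a) (int b) s t) (Q2 (int a) (int b) s t) in
        0 < - Q1 (int a) (int b) s t \<and>
        real_of_int (- Q1 (int a) (int b) s t) \<le> real_of_int lam * B / real (max a b) \<and>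
        0 < - Q2 (int a) (int b) s t \<and>
        real_of_int (- Q2 (int a) (int b) s t) \<le> real_of_int lam * B / real (max a b))}"

end

theory Submission
  imports Defs
begin

text \<open>The forms satisfy \<open>(A\<^sup>2 - B\<^sup>2) Q\<^sub>1\<^sup>2 + (A\<^sup>2 + B\<^sup>2) Q\<^sub>2\<^sup>2 = 2 Q\<^sub>3\<^sup>2\<close>, so they parametrise
  the conic defining \<open>M\<^sub>a\<^sub>,\<^sub>b(B)\<close>. Dividing \<open>(-Q\<^sub>1, -Q\<^sub>2, -Q\<^sub>3)(s, t)\<close> by
  \<open>\<lambda> = gcd(Q\<^sub>1, Q\<^sub>2)\<close>, which then also divides \<open>Q\<^sub>3\<close>, gives a primitive positive solution, and the
  height condition on \<open>(s, t)\<close> is exactly the condition \<open>max{a,b} max{x,y} \<le> B\<close>.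
  This map is a bijection onto all counted solutions except \<open>(1, 1, a)\<close>: the line through the
  rational point \<open>(1 : 1 : a)\<close> recovers \<open>(s : t) = ((a\<^sup>2 - b\<^sup>2)(x - y) : 2(z - a y))\<close>, and
  \<open>x = y\<close>, which happens only at \<open>(1, 1, a)\<close>, corresponds to the excluded \<open>s(s - a t) = 0\<close>.
  So the two counts differ by at most one.\<close>

lemma Q_conic_identity:
  "(A^2 - B^2) * (Q1 A B s t)^2 + (A^2 + B^2) * (Q2 A B s t)^2 = 2 * (Q3 A B s t)^2"
  unfolding Q1_def Q2_def Q3_def by algebra

lemma Q1_minus_Q2: "Q1 A B s t - Q2 A B s t = 4 * s * (s - A * t)"
  unfolding Q1_def Q2_def by algebra

lemma Q1_plus_Q2: "Q1 A B s t + Q2 A B s t = 2 * t * ((A^2 - B^2) * t - 2 * A * s)"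
  unfolding Q1_def Q2_def by algebra

lemma Q3_minus_Q2: "Q3 A B s t - A * Q2 A B s t = 2 * (A^2 - B^2) * t * (s - A * t)"
  unfolding Q2_def Q3_def by algebra

lemma Q1_scale: "Q1 A B (g * s) (g * t) = g^2 * Q1 A B s t"
  unfolding Q1_def by algebra

lemma Q2_scale: "Q2 A B (g * s) (g * t) = g^2 * Q2 A B s t"
  unfolding Q2_def by algebra

lemma Q3_scale: "Q3 A B (g * s) (g * t) = g^2 * Q3 A B s t"
  unfolding Q3_def by algebra

lemma
  assumes "(A^2 - B^2) * X^2 + (A^2 + B^2) * Y^2 = 2 * Z^2"
  defines "c \<equiv> 4 * (A^2 - B^2) * ((A^2 - B^2) * X + (A^2 + B^2) * Y - 2 * A * Z)"
  shows Q1_at_conic_point: "Q1 A B ((A^2 - B^2) * (X - Y)) (2 * (Z - A * Y)) = c * X"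
    and Q2_at_conic_point: "Q2 A B ((A^2 - B^2) * (X - Y)) (2 * (Z - A * Y)) = c * Y"
    and Q3_at_conic_point: "Q3 A B ((A^2 - B^2) * (X - Y)) (2 * (Z - A * Y)) = c * Z"
  using assms unfolding Q1_def Q2_def Q3_def c_def by algebra+

lemma dvd_of_square_dvd_double_square:
  fixes l c :: int
  assumes "l^2 dvd 2 * c^2"
  shows "l dvd c"
proof (cases "c = 0")
  case False
  define g where "g = gcd l c"
  obtain l' k where l': "l = g * l'" and k: "c = g * k"
    unfolding g_def by (meson gcd_dvd1 gcd_dvd2 dvdE)
  have "g \<noteq> 0" using False g_def by simp
  have "coprime l' k"
    using False l' k g_def by (metis div_gcd_coprime nonzero_mult_div_cancel_left mult_zero_left)
  have "g^2 * l'^2 dvd g^2 * (2 * k^2)"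
    using assms l' k by (simp add: power_mult_distrib mult_ac)
  with \<open>g \<noteq> 0\<close> have "l'^2 dvd 2 * k^2" by simp
  with \<open>coprime l' k\<close> have "l'^2 dvd 2" by (simp add: coprime_dvd_mult_left_iff)
  then have "\<bar>l'\<bar>^2 \<le> 2" and "l' \<noteq> 0" by (auto dest: zdvd_imp_le)
  then have "\<bar>l'\<bar>^2 < 2^2" by simp
  then have "\<bar>l'\<bar> < 2" by (rule power2_less_imp_less) simp
  with \<open>l' \<noteq> 0\<close> have "is_unit l'" by simp
  then have "l' dvd k" by (rule unit_imp_dvd)
  then show ?thesis using l' k by (simp add: mult_dvd_mono)
qed simp

lemma coprime_cross_mult_eq:
  fixes s t s' t' :: int
  assumes "coprime s t" "coprime s' t'" "t > 0" "t' > 0" "s * t' = s' * t"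
  shows "s = s' \<and> t = t'"
proof -
  have "t dvd t'"
    using assms(1,5) by (metis coprime_commute coprime_dvd_mult_right_iff dvd_triv_right)
  moreover have "t' dvd t"
    using assms(2,5) by (metis coprime_commute coprime_dvd_mult_right_iff dvd_triv_right)
  ultimately have "t = t'" using assms(3,4) by (simp add: zdvd_antisym_nonneg)
  with assms(4,5) show ?thesis by simp
qed

lemma conic_point_sign:
  fixes A B X Y Z :: int
  defines "d \<equiv> A^2 - B^2" and "e \<equiv> A^2 + B^2"
  assumes "A > 0" "d \<noteq> 0" "X > 0" "Y > 0" "Z > 0" "X \<noteq> Y"
    and conic: "d * X^2 + e * Y^2 = 2 * Z^2"
  shows "d * (d * X + e * Y - 2 * A * Z) < 0"
proof -
  have "(d * X + e * Y) * (X + Y) = 2 * Z^2 + 2 * A^2 * X * Y"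
    using conic unfolding d_def e_def by algebra
  moreover have "2 * Z^2 + 2 * A^2 * X * Y > 0" using assms by (simp add: add_pos_pos)
  ultimately have "d * X + e * Y > 0" using assms by (smt (verit) mult_nonpos_nonneg)
  moreover have "2 * A * Z > 0" using assms by simp
  ultimately have pos: "d * X + e * Y + 2 * A * Z > 0" by linarith
  have "(d * (d * X + e * Y - 2 * A * Z)) * (d * X + e * Y + 2 * A * Z) = - (d^2 * e * (X - Y)^2)"
    using conic unfolding d_def e_def by algebra
  also have "\<dots> < 0"
    using assms by (simp add: e_def add_pos_nonneg)
  finally show ?thesis using pos by (simp add: mult_less_0_iff)
qed

lemma gcd_Q1_Q2_eq:
  fixes A B s t m X Y :: int
  assumes "- Q1 A B s t = m * X" "- Q2 A B s t = m * Y" "m \<ge> 0" "coprime X Y"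
  shows "gcd (Q1 A B s t) (Q2 A B s t) = m"
proof -
  have "gcd (Q1 A B s t) (Q2 A B s t) = gcd (m * X) (m * Y)"
    using assms(1,2) by (metis gcd_neg1_int gcd_neg2_int)
  also have "\<dots> = m" using assms(3,4) by (simp flip: gcd_mult_distrib_int)
  finally show ?thesis .
qed

lemma reduced_Q_solution:
  fixes A B s t :: int
  defines "l \<equiv> gcd (Q1 A B s t) (Q2 A B s t)"
  assumes "Q1 A B s t < 0" "Q2 A B s t < 0" "Q3 A B s t < 0"
  obtains X Y Z where "l > 0" "- Q1 A B s t = l * X" "- Q2 A B s t = l * Y" "- Q3 A B s t = l * Z"
    "X > 0" "Y > 0" "Z > 0" "coprime X Y" "(A^2 - B^2) * X^2 + (A^2 + B^2) * Y^2 = 2 * Z^2"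
proof -
  have "l > 0" using assms(2) l_def by simp
  obtain X Y where X: "- Q1 A B s t = l * X" and Y: "- Q2 A B s t = l * Y"
    unfolding l_def by (meson dvd_minus_iff dvdE gcd_dvd1 gcd_dvd2)
  have "coprime X Y"
    using X Y \<open>l > 0\<close> unfolding l_def
    by (metis gcd_mult_distrib_int gcd_neg1_int gcd_neg2_int abs_of_pos mult_cancel_left1
        less_irrefl coprime_iff_gcd_eq_1)
  have "l^2 * ((A^2 - B^2) * X^2 + (A^2 + B^2) * Y^2) = 2 * (Q3 A B s t)^2"
    using Q_conic_identity[of A B s t] X Y by algebra
  then have "l dvd Q3 A B s t"
    by (metis dvd_of_square_dvd_double_square dvd_triv_left)
  then obtain Z where Z: "- Q3 A B s t = l * Z" by (meson dvd_minus_iff dvdE)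
  have "l^2 * ((A^2 - B^2) * X^2 + (A^2 + B^2) * Y^2) = l^2 * (2 * Z^2)"
    using Q_conic_identity[of A B s t] X Y Z by algebra
  then have conic: "(A^2 - B^2) * X^2 + (A^2 + B^2) * Y^2 = 2 * Z^2" using \<open>l > 0\<close> by simp
  have "l * X > 0" "l * Y > 0" "l * Z > 0" using assms(2-4) X Y Z by linarith+
  then have "X > 0" "Y > 0" "Z > 0" using \<open>l > 0\<close> by (simp_all add: zero_less_mult_iff)
  with that \<open>l > 0\<close> X Y Z \<open>coprime X Y\<close> conic show thesis by blast
qed

lemma Q_triple_ratio:
  fixes A B s t l X Y Z :: int
  assumes "s \<noteq> A * t"
    and "- Q1 A B s t = l * X" "- Q2 A B s t = l * Y" "- Q3 A B s t = l * Z"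
  shows "2 * s * (Z - A * Y) = (A^2 - B^2) * t * (X - Y)"
proof -
  have "(s - A * t) * (2 * (2 * s * (Z - A * Y))) = (s - A * t) * (2 * ((A^2 - B^2) * t * (X - Y)))"
    using assms(2-4) Q1_minus_Q2[of A B s t] Q3_minus_Q2[of A B s t] by algebra
  then show ?thesis using assms(1) by (simp only: mult_cancel_left) simp
qed

lemma Q_triple_injective:
  fixes A B s t s' t' l l' X Y Z :: int
  assumes "A^2 \<noteq> B^2" "X \<noteq> Y"
    and "coprime s t" "t > 0" "s \<noteq> A * t"
    and "coprime s' t'" "t' > 0" "s' \<noteq> A * t'"
    and "- Q1 A B s t = l * X" "- Q2 A B s t = l * Y" "- Q3 A B s t = l * Z"
    and "- Q1 A B s' t' = l' * X" "- Q2 A B s' t' = l' * Y" "- Q3 A B s' t' = l' * Z"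
  shows "s = s' \<and> t = t'"
proof -
  have "2 * s * (Z - A * Y) = (A^2 - B^2) * t * (X - Y)"
    using assms by (intro Q_triple_ratio)
  moreover have "2 * s' * (Z - A * Y) = (A^2 - B^2) * t' * (X - Y)"
    using assms by (intro Q_triple_ratio)
  ultimately have "((A^2 - B^2) * (X - Y)) * (s * t') = ((A^2 - B^2) * (X - Y)) * (s' * t)"
    by algebra
  then have "s * t' = s' * t" using assms(1,2) by simp
  then show ?thesis using assms(3,4,6,7) by (intro coprime_cross_mult_eq)
qed

lemma conic_point_Z_ne:
  fixes A B X Y Z :: int
  assumes "A^2 \<noteq> B^2" "X > 0" "Y > 0" "X \<noteq> Y"
    and "(A^2 - B^2) * X^2 + (A^2 + B^2) * Y^2 = 2 * Z^2"
  shows "Z \<noteq> A * Y"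
proof
  assume "Z = A * Y"
  then have "(A^2 - B^2) * (X^2 - Y^2) = 0" using assms(5) by algebra
  then have "X^2 = Y^2" using assms(1) by simp
  then show False using assms(2-4) by (simp add: power2_eq_iff_nonneg)
qed

lemma primitive_Q_representative:
  fixes A B s0 t0 c X Y Z :: int
  assumes "Q1 A B s0 t0 = - c * X" "Q2 A B s0 t0 = - c * Y" "Q3 A B s0 t0 = - c * Z"
    and "t0 > 0" "c > 0" "coprime X Y"
  obtains s t m where "coprime s t" "t > 0" "m > 0"
    "- Q1 A B s t = m * X" "- Q2 A B s t = m * Y" "- Q3 A B s t = m * Z"
proof -
  define g where "g = gcd s0 t0"
  define s t where "s = s0 div g" and "t = t0 div g"
  have "g > 0" using assms(4) g_def by simp
  have st: "s0 = g * s" "t0 = g * t" unfolding s_def t_def g_def by simp_all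
  have "coprime s t" using assms(4) unfolding s_def t_def g_def by (simp add: div_gcd_coprime)
  have "t > 0" using assms(4) st \<open>g > 0\<close> by (simp add: zero_less_mult_iff)
  have Q: "g^2 * Q1 A B s t = - c * X" "g^2 * Q2 A B s t = - c * Y" "g^2 * Q3 A B s t = - c * Z"
    using assms(1-3) st by (simp_all add: Q1_scale Q2_scale Q3_scale)
  have "g^2 dvd gcd (c * X) (c * Y)"
    using Q(1,2) by (metis dvd_minus_iff dvd_triv_left gcd_greatest mult_minus_left)
  also have "gcd (c * X) (c * Y) = c" using assms(5,6) by (simp flip: gcd_mult_distrib_int)
  finally obtain m where m: "c = g^2 * m" by blast
  have "m > 0" using assms(5) m \<open>g > 0\<close> by (simp add: zero_less_mult_iff)
  moreover have "g^2 * (- Q1 A B s t) = g^2 * (m * X)" "g^2 * (- Q2 A B s t) = g^2 * (m * Y)"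
    "g^2 * (- Q3 A B s t) = g^2 * (m * Z)"
    using Q m by (simp_all add: algebra_simps)
  then have "- Q1 A B s t = m * X" "- Q2 A B s t = m * Y" "- Q3 A B s t = m * Z"
    using \<open>g > 0\<close> by (simp_all only: mult_cancel_left) auto
  ultimately show thesis using that \<open>coprime s t\<close> \<open>t > 0\<close> by blast
qed

lemma conic_point_Q_representation:
  fixes A B X Y Z :: int
  assumes "A > 0" "A^2 \<noteq> B^2" "X > 0" "Y > 0" "Z > 0" "coprime X Y" "X \<noteq> Y"
    and conic: "(A^2 - B^2) * X^2 + (A^2 + B^2) * Y^2 = 2 * Z^2"
  obtains s t m where "coprime s t" "t > 0" "m > 0"
    "- Q1 A B s t = m * X" "- Q2 A B s t = m * Y" "- Q3 A B s t = m * Z"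
proof -
  define c where "c = - 4 * ((A^2 - B^2) * ((A^2 - B^2) * X + (A^2 + B^2) * Y - 2 * A * Z))"
  define s0 t0 where "s0 = (A^2 - B^2) * (X - Y)" and "t0 = 2 * (Z - A * Y)"
  have "(A^2 - B^2) * ((A^2 - B^2) * X + (A^2 + B^2) * Y - 2 * A * Z) < 0"
    using assms by (intro conic_point_sign) auto
  then have "c > 0" unfolding c_def by linarith
  have Q: "Q1 A B s0 t0 = - c * X" "Q2 A B s0 t0 = - c * Y" "Q3 A B s0 t0 = - c * Z"
    using Q1_at_conic_point[OF conic] Q2_at_conic_point[OF conic] Q3_at_conic_point[OF conic]
    unfolding s0_def t0_def c_def by (simp_all add: algebra_simps)
  have "t0 \<noteq> 0" using conic_point_Z_ne[of A B X Y Z] assms unfolding t0_def by simp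
  then consider "t0 > 0" | "- t0 > 0" by linarith
  then show thesis
  proof cases
    case 1
    show thesis by (rule primitive_Q_representative[OF Q 1 \<open>c > 0\<close> \<open>coprime X Y\<close>]) (use that in blast)
  next
    case 2
    have "Q1 A B (- s0) (- t0) = - c * X" "Q2 A B (- s0) (- t0) = - c * Y"
      "Q3 A B (- s0) (- t0) = - c * Z"
      using Q Q1_scale[of A B "-1"] Q2_scale[of A B "-1"] Q3_scale[of A B "-1"] by simp_all
    from primitive_Q_representative[OF this 2 \<open>c > 0\<close> \<open>coprime X Y\<close>] that show thesis by blast
  qed
qed

lemma card_Diff_singleton_dist_le_1: "\<bar>real (card A) - real (card (A - {p}))\<bar> \<le> 1"
proof (cases "finite A")
  case True
  then show ?thesis
    by (cases "p \<in> A") (auto simp: card_Diff_singleton_if card_gt_0_iff of_nat_diff Suc_le_eq)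
qed simp

lemma scaled_bound_iff:
  fixes m X :: int and M :: nat and B :: real
  assumes "m > 0" "M > 0"
  shows "real_of_int (m * X) \<le> real_of_int m * B / real M \<longleftrightarrow> real M * real_of_int X \<le> B"
proof -
  have "real_of_int (m * X) \<le> real_of_int m * B / real M
      \<longleftrightarrow> real_of_int m * (real M * real_of_int X) \<le> real_of_int m * B"
    using assms by (simp add: pos_le_divide_eq mult_ac)
  also have "\<dots> \<longleftrightarrow> real M * real_of_int X \<le> B" using assms by simp
  finally show ?thesis .
qed

lemma max_bound_iff:
  fixes M x y :: nat and B :: real
  shows "real (M * max x y) \<le> B \<longleftrightarrow> real M * real x \<le> B \<and> real M * real y \<le> B"
proof -
  have "real (M * max x y) = max (real M * real x) (real M * real y)"
    by (simp add: max_mult_distrib_left of_nat_max)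
  then show ?thesis by simp
qed

definition M_set :: "nat \<Rightarrow> nat \<Rightarrow> real \<Rightarrow> (nat \<times> nat \<times> nat) set" where
  "M_set a b B = {(x, y, z). 0 < x \<and> 0 < y \<and> 0 < z \<and>
      (int a ^ 2 - int b ^ 2) * int x ^ 2 + (int a ^ 2 + int b ^ 2) * int y ^ 2 = 2 * int z ^ 2 \<and>
      gcd x y = 1 \<and> real (max a b * max x y) \<le> B}"

lemma M_count_eq_card: "M_count a b B = card (M_set a b B)"
  unfolding M_count_def M_set_def ..

definition param_solution :: "nat \<Rightarrow> nat \<Rightarrow> int \<times> int \<Rightarrow> nat \<times> nat \<times> nat" where
  "param_solution a b = (\<lambda>(s, t).
     let q1 = Q1 (int a) (int b) s t; q2 = Q2 (int a) (int b) s t; q3 = Q3 (int a) (int b) s t;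
         l = gcd q1 q2
     in (nat (- q1 div l), nat (- q2 div l), nat (- q3 div l)))"

lemma param_solution_eq:
  fixes s t m X Y Z :: int
  assumes "m > 0" "coprime X Y" "- Q1 (int a) (int b) s t = m * X"
    "- Q2 (int a) (int b) s t = m * Y" "- Q3 (int a) (int b) s t = m * Z"
  shows "param_solution a b (s, t) = (nat X, nat Y, nat Z)"
  using assms gcd_Q1_Q2_eq[of "int a" "int b" s t m X Y] by (simp add: param_solution_def Let_def)

lemma mem_N_set_iff:
  "(s, t) \<in> N_set a b B \<longleftrightarrow> gcd s t = 1 \<and> s * (s - int a * t) \<noteq> 0 \<and>
      real_of_int s / real_of_int t \<noteq> (real a ^ 2 - real b ^ 2) / (2 * real a) \<and>
      t > 0 \<and> Q3 (int a) (int b) s t < 0 \<and> Q1 (int a) (int b) s t < 0 \<and> Q2 (int a) (int b) s t < 0 \<and>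
      real_of_int (- Q1 (int a) (int b) s t)
        \<le> real_of_int (gcd (Q1 (int a) (int b) s t) (Q2 (int a) (int b) s t)) * B / real (max a b) \<and>
      real_of_int (- Q2 (int a) (int b) s t)
        \<le> real_of_int (gcd (Q1 (int a) (int b) s t) (Q2 (int a) (int b) s t)) * B / real (max a b)"
  unfolding N_set_def Let_def by auto

lemma nat_triple_in_M_set_iff:
  fixes X Y Z :: int
  assumes "X > 0" "Y > 0" "Z > 0"
  shows "(nat X, nat Y, nat Z) \<in> M_set a b B \<longleftrightarrow>
    (int a ^ 2 - int b ^ 2) * X^2 + (int a ^ 2 + int b ^ 2) * Y^2 = 2 * Z^2 \<and> coprime X Y \<and>
    real (max a b) * real_of_int X \<le> B \<and> real (max a b) * real_of_int Y \<le> B"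
proof -
  have "gcd (nat X) (nat Y) = 1 \<longleftrightarrow> coprime X Y"
    using assms by (simp add: coprime_iff_gcd_eq_1 gcd_int_def flip: nat_abs_int_diff)
  moreover have "real (max a b * max (nat X) (nat Y)) \<le> B \<longleftrightarrow>
      real (max a b) * real_of_int X \<le> B \<and> real (max a b) * real_of_int Y \<le> B"
    using assms by (simp only: max_bound_iff) simp
  ultimately show ?thesis using assms unfolding M_set_def by (simp del: of_nat_mult)
qed

lemma ratio_ne_of_Q1_plus_Q2_ne:
  fixes s t :: int
  assumes "a > 0" "t \<noteq> 0" "Q1 (int a) (int b) s t + Q2 (int a) (int b) s t \<noteq> 0"
  shows "real_of_int s / real_of_int t \<noteq> (real a ^ 2 - real b ^ 2) / (2 * real a)"
proof
  assume "real_of_int s / real_of_int t = (real a ^ 2 - real b ^ 2) / (2 * real a)"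
  then have "real_of_int (2 * int a * s) = real_of_int ((int a ^ 2 - int b ^ 2) * t)"
    using assms(1,2) by (simp add: field_simps)
  then have "2 * int a * s = (int a ^ 2 - int b ^ 2) * t" by (rule of_int_eq_iff[THEN iffD1])
  then show False using assms(3) Q1_plus_Q2[of "int a" "int b" s t] by simp
qed

lemma N_set_representation:
  assumes "(s, t) \<in> N_set a b B"
  obtains l X Y Z where "l > 0"
    "- Q1 (int a) (int b) s t = l * X" "- Q2 (int a) (int b) s t = l * Y" "- Q3 (int a) (int b) s t = l * Z"
    "X > 0" "Y > 0" "Z > 0" "X \<noteq> Y" "coprime X Y"
    "(int a ^ 2 - int b ^ 2) * X^2 + (int a ^ 2 + int b ^ 2) * Y^2 = 2 * Z^2"
    "l = gcd (Q1 (int a) (int b) s t) (Q2 (int a) (int b) s t)"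
proof -
  note N = assms[unfolded mem_N_set_iff]
  obtain X Y Z where rep: "gcd (Q1 (int a) (int b) s t) (Q2 (int a) (int b) s t) > 0"
    "- Q1 (int a) (int b) s t = gcd (Q1 (int a) (int b) s t) (Q2 (int a) (int b) s t) * X"
    "- Q2 (int a) (int b) s t = gcd (Q1 (int a) (int b) s t) (Q2 (int a) (int b) s t) * Y"
    "- Q3 (int a) (int b) s t = gcd (Q1 (int a) (int b) s t) (Q2 (int a) (int b) s t) * Z"
    "X > 0" "Y > 0" "Z > 0" "coprime X Y"
    "(int a ^ 2 - int b ^ 2) * X^2 + (int a ^ 2 + int b ^ 2) * Y^2 = 2 * Z^2"
    using N by (auto elim!: reduced_Q_solution)
  have "X \<noteq> Y"
  proof
    assume "X = Y"
    then have "Q1 (int a) (int b) s t - Q2 (int a) (int b) s t = 0" using rep(2,3) by simp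
    then have "4 * s * (s - int a * t) = 0" by (simp only: Q1_minus_Q2)
    then show False using N by simp
  qed
  with rep that show thesis by blast
qed

lemma param_solution_in_M_set:
  assumes "a > 0" "p \<in> N_set a b B"
  shows "param_solution a b p \<in> M_set a b B - {(1, 1, a)}"
proof -
  obtain s t where p: "p = (s, t)" by (cases p)
  with assms(2) have st: "(s, t) \<in> N_set a b B" by simp
  obtain l X Y Z where rep: "l > 0"
    "- Q1 (int a) (int b) s t = l * X" "- Q2 (int a) (int b) s t = l * Y" "- Q3 (int a) (int b) s t = l * Z"
    "X > 0" "Y > 0" "Z > 0" "X \<noteq> Y" "coprime X Y"
    "(int a ^ 2 - int b ^ 2) * X^2 + (int a ^ 2 + int b ^ 2) * Y^2 = 2 * Z^2"
    "l = gcd (Q1 (int a) (int b) s t) (Q2 (int a) (int b) s t)"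
    using st by (rule N_set_representation)
  have "real_of_int (l * X) \<le> real_of_int l * B / real (max a b)"
    "real_of_int (l * Y) \<le> real_of_int l * B / real (max a b)"
    using st unfolding mem_N_set_iff rep(11)[symmetric] rep(2,3)[symmetric] by simp_all
  then have "real (max a b) * real_of_int X \<le> B" "real (max a b) * real_of_int Y \<le> B"
    using scaled_bound_iff[OF rep(1), of "max a b"] assms(1) by simp_all
  then have "(nat X, nat Y, nat Z) \<in> M_set a b B"
    using rep by (simp add: nat_triple_in_M_set_iff)
  moreover have "(nat X, nat Y, nat Z) \<noteq> (1, 1, a)" using rep by auto
  moreover have "param_solution a b (s, t) = (nat X, nat Y, nat Z)"
    using rep by (intro param_solution_eq)
  ultimately show ?thesis using p by simp
qed

lemma inj_on_param_solution:
  assumes "a \<noteq> b"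
  shows "inj_on (param_solution a b) (N_set a b B)"
proof (intro inj_onI, clarify)
  fix s t s' t'
  assume st: "(s, t) \<in> N_set a b B" and st': "(s', t') \<in> N_set a b B"
    and eq: "param_solution a b (s, t) = param_solution a b (s', t')"
  obtain l X Y Z where rep: "l > 0"
    "- Q1 (int a) (int b) s t = l * X" "- Q2 (int a) (int b) s t = l * Y" "- Q3 (int a) (int b) s t = l * Z"
    "X > 0" "Y > 0" "Z > 0" "X \<noteq> Y" "coprime X Y"
    using st by (rule N_set_representation)
  obtain l' X' Y' Z' where rep': "l' > 0"
    "- Q1 (int a) (int b) s' t' = l' * X'" "- Q2 (int a) (int b) s' t' = l' * Y'"
    "- Q3 (int a) (int b) s' t' = l' * Z'" "X' > 0" "Y' > 0" "Z' > 0" "coprime X' Y'"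
    using st' by (rule N_set_representation)
  have "(nat X, nat Y, nat Z) = (nat X', nat Y', nat Z')"
    using eq param_solution_eq[OF rep(1,9,2-4)] param_solution_eq[OF rep'(1,8,2-4)] by simp
  then have "X' = X" "Y' = Y" "Z' = Z" using rep rep' by (simp_all add: eq_nat_nat_iff)
  moreover have "int a ^ 2 \<noteq> int b ^ 2" using assms by simp
  moreover have "coprime s t" "t > 0" "s \<noteq> int a * t" "coprime s' t'" "t' > 0" "s' \<noteq> int a * t'"
    using st st' by (simp_all add: mem_N_set_iff coprime_iff_gcd_eq_1)
  ultimately show "s = s' \<and> t = t'"
    using Q_triple_injective[of "int a" "int b" X Y s t s' t' l Z l'] rep rep' by simp
qed

lemma M_set_subset_image_param_solution:
  assumes "a > 0" "a \<noteq> b"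
  shows "M_set a b B - {(1, 1, a)} \<subseteq> param_solution a b ` N_set a b B"
proof
  fix q
  assume q: "q \<in> M_set a b B - {(1, 1, a)}"
  obtain x y z where q_eq: "q = (x, y, z)" by (cases q)
  with q have xyz: "(x, y, z) \<in> M_set a b B" and ne: "(x, y, z) \<noteq> (1, 1, a)" by simp_all
  then have pos: "0 < x" "0 < y" "0 < z" unfolding M_set_def by auto
  from xyz have "(nat (int x), nat (int y), nat (int z)) \<in> M_set a b B" by simp
  then have "(int a ^ 2 - int b ^ 2) * int x ^ 2 + (int a ^ 2 + int b ^ 2) * int y ^ 2 = 2 * int z ^ 2 \<and>
      coprime (int x) (int y) \<and> real (max a b) * real_of_int (int x) \<le> B \<and>
      real (max a b) * real_of_int (int y) \<le> B"
    using pos by (subst (asm) nat_triple_in_M_set_iff) auto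
  then have M: "coprime (int x) (int y)"
    "(int a ^ 2 - int b ^ 2) * int x ^ 2 + (int a ^ 2 + int b ^ 2) * int y ^ 2 = 2 * int z ^ 2"
    "real (max a b) * real x \<le> B" "real (max a b) * real y \<le> B"
    by simp_all
  have "x \<noteq> y"
  proof
    assume "x = y"
    with M(1) have "x = 1" "y = 1" by simp_all
    with M(2) have "int z ^ 2 = int a ^ 2" by simp
    then have "z = a" by (simp add: power2_eq_iff_nonneg)
    with ne \<open>x = 1\<close> \<open>y = 1\<close> show False by simp
  qed
  obtain s t m where rep: "coprime s t" "t > 0" "m > 0" "- Q1 (int a) (int b) s t = m * int x"
    "- Q2 (int a) (int b) s t = m * int y" "- Q3 (int a) (int b) s t = m * int z"
    by (rule conic_point_Q_representation[of "int a" "int b" "int x" "int y" "int z"])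
      (use assms pos M \<open>x \<noteq> y\<close> in auto)
  have lam: "gcd (Q1 (int a) (int b) s t) (Q2 (int a) (int b) s t) = m"
    using gcd_Q1_Q2_eq[OF rep(4,5) _ M(1)] rep(3) by simp
  have "m * int x > 0" "m * int y > 0" "m * int z > 0" using rep pos by simp_all
  then have neg: "Q1 (int a) (int b) s t < 0" "Q2 (int a) (int b) s t < 0" "Q3 (int a) (int b) s t < 0"
    using rep by linarith+
  have "s * (s - int a * t) \<noteq> 0"
    using rep \<open>x \<noteq> y\<close> Q1_minus_Q2[of "int a" "int b" s t] by auto
  moreover have "real_of_int s / real_of_int t \<noteq> (real a ^ 2 - real b ^ 2) / (2 * real a)"
    using assms rep neg by (intro ratio_ne_of_Q1_plus_Q2_ne) auto
  moreover have "real_of_int (- Q1 (int a) (int b) s t) \<le> real_of_int m * B / real (max a b)"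
    "real_of_int (- Q2 (int a) (int b) s t) \<le> real_of_int m * B / real (max a b)"
    unfolding rep(4,5) using scaled_bound_iff[OF rep(3), of "max a b" "int x" B]
      scaled_bound_iff[OF rep(3), of "max a b" "int y" B] assms(1) M(3,4) by simp_all
  moreover have "gcd s t = 1" using rep(1) by (simp add: coprime_iff_gcd_eq_1)
  ultimately have "(s, t) \<in> N_set a b B"
    unfolding mem_N_set_iff lam using rep(2) neg by blast
  moreover have "param_solution a b (s, t) = (x, y, z)"
    using param_solution_eq[OF rep(3) M(1) rep(4-6)] by simp
  ultimately show "q \<in> param_solution a b ` N_set a b B" unfolding q_eq by force
qed

theorem lemma5p1:
  shows "\<exists>C::real. \<forall>(a::nat) (b::nat) (B::real).
           0 < a \<longrightarrow> 0 < b \<longrightarrow> coprime a b \<longrightarrow> a * b \<noteq> 1 \<longrightarrow> 1 \<le> B \<longrightarrow>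
           \<bar>real (M_count a b B) - real (card (N_set a b B))\<bar> \<le> C"
proof (intro exI[of _ 1] allI impI)
  fix a b :: nat and B :: real
  assume "0 < a" "0 < b" "coprime a b" "a * b \<noteq> 1" "1 \<le> B"
  then have "a \<noteq> b" by auto
  have "param_solution a b ` N_set a b B \<subseteq> M_set a b B - {(1, 1, a)}"
    by (rule image_subsetI) (rule param_solution_in_M_set[OF \<open>0 < a\<close>])
  with M_set_subset_image_param_solution[OF \<open>0 < a\<close> \<open>a \<noteq> b\<close>]
  have "param_solution a b ` N_set a b B = M_set a b B - {(1, 1, a)}" by (rule subset_antisym[rotated])
  with inj_on_param_solution[OF \<open>a \<noteq> b\<close>]
  have "bij_betw (param_solution a b) (N_set a b B) (M_set a b B - {(1, 1, a)})"
    unfolding bij_betw_def by blast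
  then have "card (N_set a b B) = card (M_set a b B - {(1, 1, a)})"
    by (rule bij_betw_same_card)
  then show "\<bar>real (M_count a b B) - real (card (N_set a b B))\<bar> \<le> 1"
    by (simp add: M_count_eq_card card_Diff_singleton_dist_le_1)
qed

end
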